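(* Let $\Gamma$ be a 3-colex and $E=\prod_{\nu\in\Omega}Z_\nu$ a $Z$-type error on the 3D color code on $\Gamma$. Suppose that for each unordered pair $\{c,c'\}$ of distinct colors, $\mathsf E_{cc'}$ is a set of edges of $\Gamma^{*\setminus cc'}$ such that $\prod_{e\in\mathsf E_{cc'}}Z_e=\pi_{cc'}(E)\,S_{cc'}$ for some $Z$-stabilizer $S_{cc'}$ of the 3D toric code on $\Gamma^{*\setminus cc'}$. Then $\mathsf E=\sum_{\{c,c'\}}\mathsf E_{cc'}$ equals $\delta(E\overline S)$ for some $Z$-stabilizer $\overline S$ of the color code; that is, $\mathsf E$ estimates the edge boundary $\delta E$ up to the edge boundary of a $Z$-stabilizer of the color code.
   Context: Colors are $\{r,b,g,y\}$. A 3-colex $\Gamma$ is a 3-dimensional cell complex without boundary in which every vertex is 4-valent and lies in exactly four 3-cells, and whose 3-cells are properly 4-colored: every face lies in exactly two 3-cells, which have different colors. The dual complex $\Gamma^*$ has an $i$-cell for every $(3-i)$-cell of $\Gamma$, with incidences reversed; every 3-cell of $\Gamma^*$ is a tetrahedron. A vertex of $\Gamma^*$ is given the color of the corresponding 3-cell of $\Gamma$, so the four vertices of each tetrahedron have distinct colors. An edge of $\Gamma^*$ with endpoint colors $x,y$ is an $xy$-edge; each tetrahedron has exactly one $xy$-edge for each pair $x\ne y$. The 3D color code on $\Gamma$ has one qubit per tetrahedron $\nu$ of $\Gamma^*$, $X$-stabilizer generators $B^X_v=\prod_{\nu\ni v}X_\nu$ for vertices $v$ and $Z$-stabilizer generators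 $B^Z_e=\prod_{\nu\supset e}Z_\nu$ for edges $e$; $Z$-stabilizers are products of the $B^Z_e$. For distinct colors $c,c'$ let $\{d,d'\}$ be the remaining two colors. The minor complex $\Gamma^{*\setminus cc'}$ has as vertices the $d$- and $d'$-vertices of $\Gamma^*$, as edges the $dd'$-edges of $\Gamma^*$, one face $f_e$ for each $cc'$-edge $e$ of $\Gamma^*$ whose boundary $\partial f_e$ is the set of $dd'$-edges of the tetrahedra containing $e$ (these form a cycle), and one 3-cell for each vertex of color $c$ or $c'$. The 3D toric code on $\Gamma^{*\setminus cc'}$ has qubits on edges, $X$-checks $\prod_{e\ni v}X_e$ on vertices and $Z$-stabilizer generators $\prod_{t\in\partial f}Z_t$ for faces $f$; its $Z$-stabilizers are products of these. For a tetrahedron $\nu$, $\pi_{cc'}(\nu)$ is its unique $dd'$-edge, and $\pi_{cc'}(\prod_{\nu\in\Omega}Z_\nu)=\prod_{\nu\in\Omega}Z_{\pi_{cc'}(\nu)}$ (with $Z^2=I$); $\pi_{cc'}=\pi_{c'c}$. The edge boundary of a $Z$-operator $E=\prod_{\nu\in\Omega}Z_\nu$ is $\delta E=\sum_{\nu\in\Omega}\sum_{\{x,y\}}\pi_{xy}(\nu)$, the sum over the six unordered pairs of distinct colors (i.e. over the six edges of $\nu$), taken mod 2 as a set of edges of $\Gamma^*$. Sums of edge sets are mod-2 (symmetric difference). *)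

theory Defs
  imports Main
begin

text \<open>A 3-colex Gamma is encoded by its 1-skeleton: the vertex set V of Gamma and, for every
  colour x, the fixed-point-free involution sigma x sending a vertex v to the other endpoint
  of the unique x-coloured edge at v (an edge of Gamma gets the colour of the one 3-cell
  at its endpoints that does not contain it).  Vertices of Gamma are the tetrahedra of the
  dual complex (= qubits).  An i-cell of the dual complex is the orbit of a tetrahedron
  under the involutions of the complementary colours.\<close>

datatype color = Red | Blue | Green | Yellow

definition colpairs :: "color set set" where
  "colpairs = {{c, c'} | c c'. c \<noteq> c'}"

definition colex3 :: "'v set \<Rightarrow> (color \<Rightarrow> 'v \<Rightarrow> 'v) \<Rightarrow> bool" where
  "colex3 V \<sigma> \<longleftrightarrow> finite V \<and>
     (\<forall>x. \<forall>v\<in>V. \<sigma> x v \<in> V \<and> \<sigma> x v \<noteq> v \<and> \<sigma> x (\<sigma> x v) = v)"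

inductive_set orb :: "(color \<Rightarrow> 'v \<Rightarrow> 'v) \<Rightarrow> color set \<Rightarrow> 'v \<Rightarrow> 'v set"
  for \<sigma> C v where
  orb_refl: "v \<in> orb \<sigma> C v"
| orb_step: "u \<in> orb \<sigma> C v \<Longrightarrow> x \<in> C \<Longrightarrow> \<sigma> x u \<in> orb \<sigma> C v"

text \<open>An edge of the dual complex: its (unordered) pair of endpoint colours P together with
  the set of tetrahedra containing it (an orbit under the two colours not in P).\<close>
type_synonym 'v dedge = "color set \<times> 'v set"

definition msum :: "('i \<Rightarrow> 'a set) \<Rightarrow> 'i set \<Rightarrow> 'a set" where
  "msum F I = {a. odd (card {i \<in> I. a \<in> F i})}"

definition symdiff :: "'a set \<Rightarrow> 'a set \<Rightarrow> 'a set" where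
  "symdiff A B = (A - B) \<union> (B - A)"

definition dual_edges :: "(color \<Rightarrow> 'v \<Rightarrow> 'v) \<Rightarrow> 'v set \<Rightarrow> 'v dedge set" where
  "dual_edges \<sigma> V = {(P, orb \<sigma> (- P) \<nu>) | P \<nu>. P \<in> colpairs \<and> \<nu> \<in> V}"

definition tet_contains :: "(color \<Rightarrow> 'v \<Rightarrow> 'v) \<Rightarrow> 'v \<Rightarrow> 'v dedge \<Rightarrow> bool" where
  "tet_contains \<sigma> \<nu> e \<longleftrightarrow> orb \<sigma> (- fst e) \<nu> = snd e"

text \<open>pi_{cc'}(nu) for P = {c,c'}: the unique dd'-edge of nu, {d,d'} = - P.\<close>
definition proj :: "(color \<Rightarrow> 'v \<Rightarrow> 'v) \<Rightarrow> color set \<Rightarrow> 'v \<Rightarrow> 'v dedge" where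
  "proj \<sigma> P \<nu> = (- P, orb \<sigma> P \<nu>)"

definition pi_op :: "(color \<Rightarrow> 'v \<Rightarrow> 'v) \<Rightarrow> color set \<Rightarrow> 'v set \<Rightarrow> 'v dedge set" where
  "pi_op \<sigma> P \<Omega> = msum (\<lambda>\<nu>. {proj \<sigma> P \<nu>}) \<Omega>"

definition edge_bd :: "(color \<Rightarrow> 'v \<Rightarrow> 'v) \<Rightarrow> 'v set \<Rightarrow> 'v dedge set" where
  "edge_bd \<sigma> \<Omega> = msum (\<lambda>P. pi_op \<sigma> P \<Omega>) colpairs"

definition BZ :: "(color \<Rightarrow> 'v \<Rightarrow> 'v) \<Rightarrow> 'v set \<Rightarrow> 'v dedge \<Rightarrow> 'v set" where
  "BZ \<sigma> V e = {\<nu> \<in> V. tet_contains \<sigma> \<nu> e}"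

definition cc_Zstab :: "(color \<Rightarrow> 'v \<Rightarrow> 'v) \<Rightarrow> 'v set \<Rightarrow> 'v set \<Rightarrow> bool" where
  "cc_Zstab \<sigma> V S \<longleftrightarrow> (\<exists>F. finite F \<and> F \<subseteq> dual_edges \<sigma> V \<and> S = msum (BZ \<sigma> V) F)"

text \<open>Minor complex for P = {c,c'}: edges are the dd'-edges, faces f_e are indexed by the
  cc'-edges e.\<close>
definition minor_edges :: "(color \<Rightarrow> 'v \<Rightarrow> 'v) \<Rightarrow> 'v set \<Rightarrow> color set \<Rightarrow> 'v dedge set" where
  "minor_edges \<sigma> V P = {proj \<sigma> P \<nu> | \<nu>. \<nu> \<in> V}"

definition minor_faces :: "(color \<Rightarrow> 'v \<Rightarrow> 'v) \<Rightarrow> 'v set \<Rightarrow> color set \<Rightarrow> 'v dedge set" where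
  "minor_faces \<sigma> V P = {(P, orb \<sigma> (- P) \<nu>) | \<nu>. \<nu> \<in> V}"

text \<open>Boundary of f_e: the dd'-edges of the tetrahedra containing e (taken mod 2; in a
  colex these edges form a cycle, so each occurs once).\<close>
definition face_bd :: "(color \<Rightarrow> 'v \<Rightarrow> 'v) \<Rightarrow> 'v set \<Rightarrow> color set \<Rightarrow> 'v dedge \<Rightarrow> 'v dedge set" where
  "face_bd \<sigma> V P e = msum (\<lambda>\<nu>. {proj \<sigma> P \<nu>}) {\<nu> \<in> V. tet_contains \<sigma> \<nu> e}"

definition tc_Zstab :: "(color \<Rightarrow> 'v \<Rightarrow> 'v) \<Rightarrow> 'v set \<Rightarrow> color set \<Rightarrow> 'v dedge set \<Rightarrow> bool" where
  "tc_Zstab \<sigma> V P S \<longleftrightarrow>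
     (\<exists>F. finite F \<and> F \<subseteq> minor_faces \<sigma> V P \<and> S = msum (face_bd \<sigma> V P) F)"

end

theory Submission
  imports Defs "HOL-Library.Z2" "HOL-Library.Indicator_Function"
begin

text \<open>Take Sbar to be the colour-code stabiliser generated by the B^Z_e for all
  cc'-edges e whose faces f_e occur in the toric-code stabilisers S_cc'. The edge boundary is
  linear over GF(2), and the edge boundary of B^Z_e is exactly the face boundary of f_e in the
  minor of the colour pair of e: for any other pair Q, a colour d in Q but not in the pair of e
  gives a fixed-point-free involution of the tetrahedra around e preserving their Q-edge, so
  the contributions of pi_Q cancel in pairs. Summing over the six minors gives
  sum E_cc' = delta E + delta Sbar.\<close>

text \<open>Mod-2 sums of sets are computed through their indicator functions with values in the
  two-element field; bit addition is kept as ring addition rather than rewritten to xor.\<close>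

declare add_bit_eq_xor [simp del]

lemma bit_add_self [simp]: "(x :: bit) + x = 0"
  by (cases x) (simp_all flip: one_add_one)

lemma of_nat_bit_eq_odd: "(of_nat n :: bit) = of_bool (odd n)"
  by (induction n) (auto simp: add.commute)

lemma indicator_msum:
  "finite I \<Longrightarrow> (indicator (msum F I) a :: bit) = (\<Sum>i\<in>I. indicator (F i) a)"
  by (simp add: indicator_def msum_def of_nat_bit_eq_odd Int_def conj_commute)

lemma indicator_symdiff: "(indicator (symdiff A B) a :: bit) = indicator A a + indicator B a"
  by (auto simp: indicator_def symdiff_def)

lemma set_eq_indicator_bitI:
  assumes "\<And>a. (indicator A a :: bit) = indicator B a"
  shows "A = B"
  using assms by (auto simp: set_eq_iff indicator_def) (metis of_bool_eq_iff)+

lemma finite_symdiff: "finite A \<Longrightarrow> finite B \<Longrightarrow> finite (symdiff A B)"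
  by (simp add: symdiff_def)

lemma sum_symdiff_bit:
  assumes "finite A" "finite B"
  shows "(\<Sum>x\<in>symdiff A B. f x) = (\<Sum>x\<in>A. f x) + (\<Sum>x\<in>B. f x :: bit)"
proof -
  have "(\<Sum>x\<in>A. f x) + (\<Sum>x\<in>B. f x)
      = (\<Sum>x\<in>A - B. f x) + (\<Sum>x\<in>B - A. f x) + ((\<Sum>x\<in>A \<inter> B. f x) + (\<Sum>x\<in>A \<inter> B. f x))"
    using assms by (simp add: sum.Int_Diff[of A _ B] sum.Int_Diff[of B _ A] Int_commute ac_simps)
  also have "\<dots> = (\<Sum>x\<in>symdiff A B. f x)"
    using assms by (simp add: symdiff_def sum.union_disjoint Diff_Int_distrib2)
  finally show ?thesis ..
qed

lemma finite_msum: "finite I \<Longrightarrow> (\<And>i. i \<in> I \<Longrightarrow> finite (F i)) \<Longrightarrow> finite (msum F I)"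
  by (rule finite_subset[of _ "\<Union>i\<in>I. F i"]) (auto simp: msum_def card_gt_0_iff dest!: odd_pos)

lemma msum_insert:
  "finite I \<Longrightarrow> i \<notin> I \<Longrightarrow> msum F (insert i I) = symdiff (F i) (msum F I)"
  by (rule set_eq_indicator_bitI) (simp add: indicator_msum indicator_symdiff)

lemma sum_msum_bit:
  assumes "finite I" "\<And>i. i \<in> I \<Longrightarrow> finite (F i)"
  shows "(\<Sum>x\<in>msum F I. f x) = (\<Sum>i\<in>I. \<Sum>x\<in>F i. f x :: bit)"
  using assms
proof (induction I rule: finite_induct)
  case empty
  then show ?case
    by (simp add: msum_def)
next
  case (insert i I)
  then show ?case
    by (simp add: msum_insert sum_symdiff_bit finite_msum)
qed

lemma msum_cong: "(\<And>i. i \<in> I \<Longrightarrow> F i = G i) \<Longrightarrow> msum F I = msum G I"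
  unfolding msum_def by (intro Collect_cong arg_cong[where f="\<lambda>S. odd (card S)"]) auto

lemma msum_eq_single:
  assumes "finite I" "i \<in> I" "\<And>j. j \<in> I \<Longrightarrow> j \<noteq> i \<Longrightarrow> F j = {}"
  shows "msum F I = F i"
proof (rule set_eq_indicator_bitI)
  fix a
  show "(indicator (msum F I) a :: bit) = indicator (F i) a"
    using assms by (simp add: indicator_msum sum.remove)
qed

lemma msum_symdiff:
  "finite I \<Longrightarrow> msum (\<lambda>i. symdiff (F i) (G i)) I = symdiff (msum F I) (msum G I)"
  by (rule set_eq_indicator_bitI) (simp add: indicator_msum indicator_symdiff sum.distrib)

lemma msum_commute:
  "finite I \<Longrightarrow> finite J \<Longrightarrow> msum (\<lambda>i. msum (F i) J) I = msum (\<lambda>j. msum (\<lambda>i. F i j) I) J"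
  by (rule set_eq_indicator_bitI) (simp add: indicator_msum sum.swap[of _ I])

lemma msum_symdiff_index:
  "finite A \<Longrightarrow> finite B \<Longrightarrow> msum F (symdiff A B) = symdiff (msum F A) (msum F B)"
  by (rule set_eq_indicator_bitI)
     (simp add: indicator_msum indicator_symdiff sum_symdiff_bit finite_symdiff)

lemma msum_msum_index:
  assumes "finite I" "\<And>i. i \<in> I \<Longrightarrow> finite (G i)"
  shows "msum F (msum G I) = msum (\<lambda>i. msum F (G i)) I"
  by (rule set_eq_indicator_bitI)
     (simp add: assms indicator_msum sum_msum_bit finite_msum)

lemma msum_UNION_disjoint:
  assumes "finite I" "\<And>i. i \<in> I \<Longrightarrow> finite (A i)"
    and "\<And>i j. i \<in> I \<Longrightarrow> j \<in> I \<Longrightarrow> i \<noteq> j \<Longrightarrow> A i \<inter> A j = {}"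
  shows "msum F (\<Union>i\<in>I. A i) = msum (\<lambda>i. msum F (A i)) I"
  by (rule set_eq_indicator_bitI)
     (simp add: assms indicator_msum sum.UNION_disjoint)

lemma finite_colpairs: "finite colpairs"
proof -
  have "(UNIV :: color set) = {Red, Blue, Green, Yellow}"
    using color.exhaust by blast
  then have "finite (UNIV :: color set)"
    by (metis finite.emptyI finite_insert)
  then show ?thesis
    by (metis Pow_UNIV finite_Pow_iff finite_subset subset_UNIV)
qed

lemma orb_trans: "w \<in> orb \<sigma> C u \<Longrightarrow> u \<in> orb \<sigma> C v \<Longrightarrow> w \<in> orb \<sigma> C v"
  by (induction rule: orb.induct) (auto intro: orb.orb_step)

lemma orb_involution_eq:
  assumes "x \<in> C" "\<sigma> x (\<sigma> x v) = v"
  shows "orb \<sigma> C (\<sigma> x v) = orb \<sigma> C v"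
proof -
  have "\<sigma> x v \<in> orb \<sigma> C v" "v \<in> orb \<sigma> C (\<sigma> x v)"
    using orb.orb_step[OF orb.orb_refl assms(1), of \<sigma>] assms(2) by (metis, metis)
  then show ?thesis
    by (auto intro: orb_trans)
qed

lemma minor_faces_eq:
  "P \<in> colpairs \<Longrightarrow> minor_faces \<sigma> V P = {e \<in> dual_edges \<sigma> V. fst e = P}"
  by (auto simp: minor_faces_def dual_edges_def)

lemma finite_BZ: "colex3 V \<sigma> \<Longrightarrow> finite (BZ \<sigma> V e)"
  by (simp add: colex3_def BZ_def)

lemma pi_op_BZ_eq_empty:
  assumes col: "colex3 V \<sigma>" and e: "e \<in> dual_edges \<sigma> V"
    and Q: "Q \<in> colpairs" "Q \<noteq> fst e"
  shows "pi_op \<sigma> Q (BZ \<sigma> V e) = {}"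
proof -
  obtain P \<nu>\<^sub>0 where P: "P \<in> colpairs" and e_eq: "e = (P, orb \<sigma> (- P) \<nu>\<^sub>0)"
    using e by (auto simp: dual_edges_def)
  obtain d where d: "d \<in> Q" "d \<notin> P"
    using P Q e_eq unfolding colpairs_def by (auto simp: doubleton_eq_iff)
  have swap: "\<sigma> d \<nu> \<in> BZ \<sigma> V e \<and> \<sigma> d (\<sigma> d \<nu>) = \<nu> \<and> \<sigma> d \<nu> \<noteq> \<nu> \<and> proj \<sigma> Q (\<sigma> d \<nu>) = proj \<sigma> Q \<nu>"
    if \<nu>: "\<nu> \<in> BZ \<sigma> V e" for \<nu>
  proof -
    have inv: "\<sigma> d (\<sigma> d \<nu>) = \<nu>" "\<sigma> d \<nu> \<noteq> \<nu>" "\<sigma> d \<nu> \<in> V"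
      using col \<nu> by (auto simp: colex3_def BZ_def)
    moreover have "orb \<sigma> (- P) (\<sigma> d \<nu>) = orb \<sigma> (- P) \<nu>" "orb \<sigma> Q (\<sigma> d \<nu>) = orb \<sigma> Q \<nu>"
      using d inv by (simp_all add: orb_involution_eq)
    ultimately show ?thesis
      using \<nu> by (simp add: BZ_def tet_contains_def proj_def e_eq)
  qed
  have "(indicator (pi_op \<sigma> Q (BZ \<sigma> V e)) a :: bit) = 0" for a
  proof -
    have "(indicator (pi_op \<sigma> Q (BZ \<sigma> V e)) a :: bit) = (\<Sum>\<nu>\<in>BZ \<sigma> V e. indicator {proj \<sigma> Q \<nu>} a)"
      by (simp add: pi_op_def indicator_msum finite_BZ[OF col])
    also have "\<dots> = 0"
      by (rule sum_involution_eq_0[where h = "\<sigma> d"]) (simp_all add: swap)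
    finally show ?thesis .
  qed
  then show ?thesis
    by (auto simp: indicator_def)
qed

lemma edge_bd_BZ:
  assumes "colex3 V \<sigma>" "e \<in> dual_edges \<sigma> V"
  shows "edge_bd \<sigma> (BZ \<sigma> V e) = face_bd \<sigma> V (fst e) e"
proof -
  have "fst e \<in> colpairs"
    using assms(2) by (auto simp: dual_edges_def)
  then have "edge_bd \<sigma> (BZ \<sigma> V e) = pi_op \<sigma> (fst e) (BZ \<sigma> V e)"
    unfolding edge_bd_def
    by (rule msum_eq_single[OF finite_colpairs]) (use assms pi_op_BZ_eq_empty in blast)+
  then show ?thesis
    by (simp add: face_bd_def pi_op_def BZ_def)
qed

lemma pi_op_symdiff:
  "finite A \<Longrightarrow> finite B \<Longrightarrow> pi_op \<sigma> P (symdiff A B) = symdiff (pi_op \<sigma> P A) (pi_op \<sigma> P B)"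
  unfolding pi_op_def by (rule msum_symdiff_index)

lemma edge_bd_symdiff:
  assumes "finite A" "finite B"
  shows "edge_bd \<sigma> (symdiff A B) = symdiff (edge_bd \<sigma> A) (edge_bd \<sigma> B)"
  unfolding edge_bd_def pi_op_symdiff[OF assms] by (rule msum_symdiff[OF finite_colpairs])

lemma pi_op_msum:
  "finite I \<Longrightarrow> (\<And>i. i \<in> I \<Longrightarrow> finite (G i)) \<Longrightarrow>
    pi_op \<sigma> P (msum G I) = msum (\<lambda>i. pi_op \<sigma> P (G i)) I"
  unfolding pi_op_def by (rule msum_msum_index)

lemma edge_bd_msum:
  assumes "finite I" "\<And>i. i \<in> I \<Longrightarrow> finite (G i)"
  shows "edge_bd \<sigma> (msum G I) = msum (\<lambda>i. edge_bd \<sigma> (G i)) I"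
proof -
  have "edge_bd \<sigma> (msum G I) = msum (\<lambda>P. msum (\<lambda>i. pi_op \<sigma> P (G i)) I) colpairs"
    unfolding edge_bd_def using assms by (simp add: pi_op_msum)
  then show ?thesis
    unfolding edge_bd_def by (simp add: msum_commute[OF finite_colpairs assms(1)])
qed

lemma edge_bd_cc_Zstab:
  assumes "colex3 V \<sigma>" "finite F" "F \<subseteq> dual_edges \<sigma> V"
  shows "edge_bd \<sigma> (msum (BZ \<sigma> V) F) = msum (\<lambda>e. face_bd \<sigma> V (fst e) e) F"
proof -
  have "edge_bd \<sigma> (msum (BZ \<sigma> V) F) = msum (\<lambda>e. edge_bd \<sigma> (BZ \<sigma> V e)) F"
    using assms by (intro edge_bd_msum finite_BZ)
  also have "\<dots> = msum (\<lambda>e. face_bd \<sigma> V (fst e) e) F"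
    using assms by (intro msum_cong edge_bd_BZ) auto
  finally show ?thesis .
qed

theorem theorem4:
  fixes V :: "'v set" and \<sigma> :: "color \<Rightarrow> 'v \<Rightarrow> 'v" and \<Omega> :: "'v set"
    and Es :: "color set \<Rightarrow> 'v dedge set"
  assumes "colex3 V \<sigma>"
    and "\<Omega> \<subseteq> V"
    and "\<forall>P\<in>colpairs. Es P \<subseteq> minor_edges \<sigma> V P \<and>
           (\<exists>S. tc_Zstab \<sigma> V P S \<and> Es P = symdiff (pi_op \<sigma> P \<Omega>) S)"
  shows "\<exists>Sbar. cc_Zstab \<sigma> V Sbar \<and> msum Es colpairs = edge_bd \<sigma> (symdiff \<Omega> Sbar)"
proof -
  obtain F where F: "\<And>P. P \<in> colpairs \<Longrightarrow> finite (F P) \<and> F P \<subseteq> minor_faces \<sigma> V P \<and>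
      Es P = symdiff (pi_op \<sigma> P \<Omega>) (msum (face_bd \<sigma> V P) (F P))"
    using assms(3) unfolding tc_Zstab_def by metis
  then have F_fst: "fst e = P" if "P \<in> colpairs" "e \<in> F P" for P e
    using that by (auto simp: minor_faces_eq)
  define U where "U = (\<Union>P\<in>colpairs. F P)"
  have U: "finite U" "U \<subseteq> dual_edges \<sigma> V"
    using F finite_colpairs by (auto simp: U_def minor_faces_eq)
  have fin_\<Omega>: "finite \<Omega>"
    using assms(1,2) finite_subset by (auto simp: colex3_def)
  have "msum Es colpairs = msum (\<lambda>P. symdiff (pi_op \<sigma> P \<Omega>) (msum (face_bd \<sigma> V P) (F P))) colpairs"
    using F by (intro msum_cong) blast
  also have "\<dots> = symdiff (edge_bd \<sigma> \<Omega>) (msum (\<lambda>P. msum (face_bd \<sigma> V P) (F P)) colpairs)"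
    unfolding edge_bd_def by (rule msum_symdiff[OF finite_colpairs])
  also have "msum (\<lambda>P. msum (face_bd \<sigma> V P) (F P)) colpairs
      = msum (\<lambda>P. msum (\<lambda>e. face_bd \<sigma> V (fst e) e) (F P)) colpairs"
    using F_fst by (intro msum_cong) simp
  also have "\<dots> = msum (\<lambda>e. face_bd \<sigma> V (fst e) e) U"
    unfolding U_def
    by (rule msum_UNION_disjoint[OF finite_colpairs, symmetric]) (use F F_fst in blast)+
  also have "\<dots> = edge_bd \<sigma> (msum (BZ \<sigma> V) U)"
    using assms(1) U by (rule edge_bd_cc_Zstab[symmetric])
  also have "symdiff (edge_bd \<sigma> \<Omega>) \<dots> = edge_bd \<sigma> (symdiff \<Omega> (msum (BZ \<sigma> V) U))"
    using assms(1) U fin_\<Omega> by (simp add: edge_bd_symdiff finite_msum finite_BZ)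
  finally show ?thesis
    using U unfolding cc_Zstab_def by blast
qed

end
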